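(* Let $R$ be a local ring and $s\in R$ a central element. The following are equivalent: (1) every $A\in M_2(R;s)$ with $A\notin U\big(M_2(R;s)\big)$ and $I_2-A\notin U\big(M_2(R;s)\big)$ is strongly nil clean; (2) every $A\in M_2(R;s)$ with $A\notin U\big(M_2(R;s)\big)$ and $I_2-A\notin U\big(M_2(R;s)\big)$ is strongly $J$-clean, and $J(R)$ is nil.
   Context: All rings are associative with identity. A ring $R$ is local if $R/J(R)$ is a division ring, where $J(R)$ is the Jacobson radical; $U(T)$ is the group of units and $Nil(T)$ the set of nilpotent elements of a ring $T$; $J(R)$ is nil if every element of it is nilpotent. For a ring $R$ and a central element $s\in R$, $M_2(R;s)$ denotes the ring whose elements are the $2\times 2$ arrays $\left[\begin{smallmatrix} a&b\\ c&d\end{smallmatrix}\right]$ with $a,b,c,d\in R$, with componentwise addition and multiplication $\left[\begin{smallmatrix} a&b\\ c&d\end{smallmatrix}\right]\left[\begin{smallmatrix} a'&b'\\ c'&d'\end{smallmatrix}\right]=\left[\begin{smallmatrix} aa'+s^2bc'&ab'+bd'\\ ca'+dc'&s^2cb'+dd'\end{smallmatrix}\right]$, with identity $I_2$. An element $a$ of a ring $T$ is strongly nil clean if there is an idempotent $e\in T$ with $ae=ea$ and $a-e\in Nil(T)$; it is strongly $J$-clean if there is an idempotent $e\in T$ with $ae=ea$ and $a-e\in J(T)$. *)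

theory Defs
  imports "HOL-Algebra.Algebra"
begin

definition left_ideal :: "('a, 'b) ring_scheme \<Rightarrow> 'a set \<Rightarrow> bool" where
  "left_ideal T I \<longleftrightarrow> I \<subseteq> carrier T \<and> \<zero>\<^bsub>T\<^esub> \<in> I
     \<and> (\<forall>x\<in>I. \<forall>y\<in>I. x \<oplus>\<^bsub>T\<^esub> y \<in> I)
     \<and> (\<forall>x\<in>I. \<ominus>\<^bsub>T\<^esub> x \<in> I)
     \<and> (\<forall>r\<in>carrier T. \<forall>x\<in>I. r \<otimes>\<^bsub>T\<^esub> x \<in> I)"

definition maximal_left_ideal :: "('a, 'b) ring_scheme \<Rightarrow> 'a set \<Rightarrow> bool" where
  "maximal_left_ideal T I \<longleftrightarrow> left_ideal T I \<and> I \<noteq> carrier T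
     \<and> (\<forall>K. left_ideal T K \<and> I \<subseteq> K \<longrightarrow> K = I \<or> K = carrier T)"

definition jacobson :: "('a, 'b) ring_scheme \<Rightarrow> 'a set" where
  "jacobson T = carrier T \<inter> \<Inter> {I. maximal_left_ideal T I}"

text \<open>R is local iff the quotient R/J(R) is a division ring: it is nonzero
  (1 not in J(R)) and every nonzero coset x + J(R) has a two-sided inverse y + J(R).\<close>
definition local_ring :: "('a, 'b) ring_scheme \<Rightarrow> bool" where
  "local_ring R \<longleftrightarrow> \<one>\<^bsub>R\<^esub> \<notin> jacobson R
     \<and> (\<forall>x\<in>carrier R - jacobson R. \<exists>y\<in>carrier R.
          x \<otimes>\<^bsub>R\<^esub> y \<ominus>\<^bsub>R\<^esub> \<one>\<^bsub>R\<^esub> \<in> jacobson R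
        \<and> y \<otimes>\<^bsub>R\<^esub> x \<ominus>\<^bsub>R\<^esub> \<one>\<^bsub>R\<^esub> \<in> jacobson R)"

definition nilpotents :: "('a, 'b) ring_scheme \<Rightarrow> 'a set" where
  "nilpotents T = {x \<in> carrier T. \<exists>n::nat. x [^]\<^bsub>T\<^esub> n = \<zero>\<^bsub>T\<^esub>}"

definition nil_jacobson :: "('a, 'b) ring_scheme \<Rightarrow> bool" where
  "nil_jacobson T \<longleftrightarrow> jacobson T \<subseteq> nilpotents T"

definition idempotent_elem :: "('a, 'b) ring_scheme \<Rightarrow> 'a \<Rightarrow> bool" where
  "idempotent_elem T e \<longleftrightarrow> e \<in> carrier T \<and> e \<otimes>\<^bsub>T\<^esub> e = e"

definition strongly_nil_clean :: "('a, 'b) ring_scheme \<Rightarrow> 'a \<Rightarrow> bool" where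
  "strongly_nil_clean T a \<longleftrightarrow> (\<exists>e. idempotent_elem T e
     \<and> a \<otimes>\<^bsub>T\<^esub> e = e \<otimes>\<^bsub>T\<^esub> a \<and> a \<ominus>\<^bsub>T\<^esub> e \<in> nilpotents T)"

definition strongly_J_clean :: "('a, 'b) ring_scheme \<Rightarrow> 'a \<Rightarrow> bool" where
  "strongly_J_clean T a \<longleftrightarrow> (\<exists>e. idempotent_elem T e
     \<and> a \<otimes>\<^bsub>T\<^esub> e = e \<otimes>\<^bsub>T\<^esub> a \<and> a \<ominus>\<^bsub>T\<^esub> e \<in> jacobson T)"

definition central_elem :: "('a, 'b) ring_scheme \<Rightarrow> 'a \<Rightarrow> bool" where
  "central_elem R s \<longleftrightarrow> s \<in> carrier R \<and> (\<forall>x\<in>carrier R. s \<otimes>\<^bsub>R\<^esub> x = x \<otimes>\<^bsub>R\<^esub> s)"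

definition M2s_mult :: "('a, 'b) ring_scheme \<Rightarrow> 'a \<Rightarrow> 'a \<times> 'a \<times> 'a \<times> 'a \<Rightarrow> 'a \<times> 'a \<times> 'a \<times> 'a \<Rightarrow> 'a \<times> 'a \<times> 'a \<times> 'a" where
  "M2s_mult R s = (\<lambda>(a,b,c,d) (a',b',c',d').
        (a \<otimes>\<^bsub>R\<^esub> a' \<oplus>\<^bsub>R\<^esub> (s \<otimes>\<^bsub>R\<^esub> s) \<otimes>\<^bsub>R\<^esub> b \<otimes>\<^bsub>R\<^esub> c',
         a \<otimes>\<^bsub>R\<^esub> b' \<oplus>\<^bsub>R\<^esub> b \<otimes>\<^bsub>R\<^esub> d',
         c \<otimes>\<^bsub>R\<^esub> a' \<oplus>\<^bsub>R\<^esub> d \<otimes>\<^bsub>R\<^esub> c',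
         (s \<otimes>\<^bsub>R\<^esub> s) \<otimes>\<^bsub>R\<^esub> c \<otimes>\<^bsub>R\<^esub> b' \<oplus>\<^bsub>R\<^esub> d \<otimes>\<^bsub>R\<^esub> d'))"

definition M2s_add :: "('a, 'b) ring_scheme \<Rightarrow> 'a \<times> 'a \<times> 'a \<times> 'a \<Rightarrow> 'a \<times> 'a \<times> 'a \<times> 'a \<Rightarrow> 'a \<times> 'a \<times> 'a \<times> 'a" where
  "M2s_add R = (\<lambda>(a,b,c,d) (a',b',c',d').
        (a \<oplus>\<^bsub>R\<^esub> a', b \<oplus>\<^bsub>R\<^esub> b', c \<oplus>\<^bsub>R\<^esub> c', d \<oplus>\<^bsub>R\<^esub> d'))"

text \<open>The generalized matrix ring M_2(R;s); an array [[a,b],[c,d]] is the tuple (a,b,c,d).\<close>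
definition M2s :: "('a, 'b) ring_scheme \<Rightarrow> 'a \<Rightarrow> ('a \<times> 'a \<times> 'a \<times> 'a) ring" where
  "M2s R s = \<lparr> carrier = carrier R \<times> carrier R \<times> carrier R \<times> carrier R,
     monoid.mult = M2s_mult R s,
     one = (\<one>\<^bsub>R\<^esub>, \<zero>\<^bsub>R\<^esub>, \<zero>\<^bsub>R\<^esub>, \<one>\<^bsub>R\<^esub>),
     ring.zero = (\<zero>\<^bsub>R\<^esub>, \<zero>\<^bsub>R\<^esub>, \<zero>\<^bsub>R\<^esub>, \<zero>\<^bsub>R\<^esub>),
     ring.add = M2s_add R \<rparr>"

end

theory Submission
  imports Defs
begin

text \<open>Over a local ring R the non-units are exactly the radical J(R) and the only idempotents
  are 0 and 1. In M_2(R;s) a block LDU factorisation shows that a matrix with invertible corner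
  is invertible as soon as its Schur complement is; with this, every idempotent e other than 0
  and 1 is similar to diag(1,0) or diag(0,1). Now let A and 1 - A be non-units and A = e + w with
  e an idempotent commuting with A and w nilpotent or in the radical. Then 1 - w and 1 + w are
  units, which forces e to be nontrivial, and conjugating e to diag(1,0) or diag(0,1) makes w
  diagonal, since it commutes with e. A diagonal matrix is nilpotent, resp. lies in the radical,
  iff both diagonal entries are nilpotent, resp. lie in J(R). Hence nilpotent w lie in the radical,
  and the converse holds when J(R) is nil. Finally, applying (1) to diag(j,1) for j in J(R)
  shows that j is nilpotent.\<close>

lemma (in monoid) UnitsI:
  "x \<in> carrier G \<Longrightarrow> y \<in> carrier G \<Longrightarrow> x \<otimes> y = \<one> \<Longrightarrow> y \<otimes> x = \<one> \<Longrightarrow> x \<in> Units G"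
  unfolding Units_def by auto

lemma (in monoid) Units_inv_mult_cancel [simp]:
  "P \<in> Units G \<Longrightarrow> x \<in> carrier G \<Longrightarrow> inv P \<otimes> (P \<otimes> x) = x"
  by (simp add: m_assoc[symmetric] Units_closed)

lemma (in monoid) Units_mult_inv_cancel [simp]:
  "P \<in> Units G \<Longrightarrow> x \<in> carrier G \<Longrightarrow> P \<otimes> (inv P \<otimes> x) = x"
  by (simp add: m_assoc[symmetric] Units_closed)

section \<open>The Jacobson radical\<close>

context ring
begin

lemma left_ideal_one_imp_carrier: "left_ideal R K \<Longrightarrow> \<one> \<in> K \<Longrightarrow> K = carrier R"
  unfolding left_ideal_def by (metis r_one subsetI subset_antisym)

lemma left_ideal_zero: "left_ideal R {\<zero>}"
  by (simp add: left_ideal_def)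

lemma left_ideal_Union_chain:
  assumes "C \<noteq> {}" and ideals: "\<And>K. K \<in> C \<Longrightarrow> left_ideal R K"
    and chain: "\<And>K L. K \<in> C \<Longrightarrow> L \<in> C \<Longrightarrow> K \<subseteq> L \<or> L \<subseteq> K"
  shows "left_ideal R (\<Union>C)"
proof -
  have "x \<oplus> y \<in> \<Union>C" if xy: "x \<in> \<Union>C" "y \<in> \<Union>C" for x y
  proof -
    obtain K L where KL: "K \<in> C" "L \<in> C" "x \<in> K" "y \<in> L" using xy by blast
    from chain[OF KL(1,2)] have "x \<oplus> y \<in> K \<union> L"
      using KL ideals[OF KL(1)] ideals[OF KL(2)] by (auto simp: left_ideal_def)
    then show ?thesis using KL by blast
  qed
  with assms(1) ideals show ?thesis
    unfolding left_ideal_def by blast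
qed

lemma left_ideal_extends_to_maximal:
  assumes "left_ideal R L" and "\<one> \<notin> L"
  shows "\<exists>M. maximal_left_ideal R M \<and> L \<subseteq> M"
proof -
  define S where "S = {K. left_ideal R K \<and> L \<subseteq> K \<and> \<one> \<notin> K}"
  have "\<exists>M\<in>S. \<forall>K\<in>S. M \<subseteq> K \<longrightarrow> K = M"
  proof (rule subset_Zorn_nonempty)
    show "S \<noteq> {}" using assms by (auto simp: S_def)
  next
    fix C assume "C \<noteq> {}" and "subset.chain S C"
    then show "\<Union>C \<in> S"
      using left_ideal_Union_chain[of C] by (auto simp: S_def subset.chain_def)
  qed
  then obtain M where "M \<in> S" and max: "\<forall>K\<in>S. M \<subseteq> K \<longrightarrow> K = M" by blast
  have "maximal_left_ideal R M"
    unfolding maximal_left_ideal_def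
  proof (intro conjI allI impI)
    show "left_ideal R M" "M \<noteq> carrier R" using \<open>M \<in> S\<close> by (auto simp: S_def)
    fix K assume "left_ideal R K \<and> M \<subseteq> K"
    then show "K = M \<or> K = carrier R"
      using max \<open>M \<in> S\<close> left_ideal_one_imp_carrier by (auto simp: S_def)
  qed
  with \<open>M \<in> S\<close> show ?thesis by (auto simp: S_def)
qed

lemma left_ideal_add_left_multiples:
  assumes M: "left_ideal R M" and x: "x \<in> carrier R"
  shows "left_ideal R {m \<oplus> t \<otimes> x | m t. m \<in> M \<and> t \<in> carrier R}"
    (is "left_ideal R ?K")
  unfolding left_ideal_def
proof (intro conjI ballI)
  have Mc: "M \<subseteq> carrier R" and M0: "\<zero> \<in> M" using M by (auto simp: left_ideal_def)
  then show "?K \<subseteq> carrier R" using x by auto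
  have "\<zero> = \<zero> \<oplus> \<zero> \<otimes> x" using x by simp
  then show "\<zero> \<in> ?K" using M0 by blast
next
  fix u v assume "u \<in> ?K" "v \<in> ?K"
  then obtain m1 t1 m2 t2 where uv: "u = m1 \<oplus> t1 \<otimes> x" "v = m2 \<oplus> t2 \<otimes> x"
    and mt: "m1 \<in> M" "m2 \<in> M" "t1 \<in> carrier R" "t2 \<in> carrier R" by blast
  then have "m1 \<oplus> m2 \<in> M" "m1 \<in> carrier R" "m2 \<in> carrier R"
    using M by (auto simp: left_ideal_def)
  moreover have "u \<oplus> v = (m1 \<oplus> m2) \<oplus> (t1 \<oplus> t2) \<otimes> x"
    using uv mt calculation x by (simp add: l_distr a_ac)
  ultimately show "u \<oplus> v \<in> ?K" using mt by blast
next
  fix u assume "u \<in> ?K"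
  then obtain m t where u: "u = m \<oplus> t \<otimes> x" and mt: "m \<in> M" "t \<in> carrier R" by blast
  then have "\<ominus> m \<in> M" "m \<in> carrier R" using M by (auto simp: left_ideal_def)
  moreover have "\<ominus> u = (\<ominus> m) \<oplus> (\<ominus> t) \<otimes> x"
    using u mt calculation x by (simp add: l_minus minus_add)
  ultimately show "\<ominus> u \<in> ?K" using mt by blast
next
  fix r u assume r: "r \<in> carrier R" and "u \<in> ?K"
  then obtain m t where u: "u = m \<oplus> t \<otimes> x" and mt: "m \<in> M" "t \<in> carrier R" by blast
  then have "r \<otimes> m \<in> M" "m \<in> carrier R" using M r by (auto simp: left_ideal_def)
  moreover have "r \<otimes> u = (r \<otimes> m) \<oplus> (r \<otimes> t) \<otimes> x"
    using u mt calculation x r by (simp add: r_distr m_assoc)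
  ultimately show "r \<otimes> u \<in> ?K" using mt r by blast
qed

lemma jacobson_left_ideal: "left_ideal R (jacobson R)"
  unfolding left_ideal_def jacobson_def
  by (auto simp: maximal_left_ideal_def left_ideal_def)

lemma jacobson_subset: "jacobson R \<subseteq> carrier R"
  by (auto simp: jacobson_def)

lemma jacobson_l_closed: "x \<in> jacobson R \<Longrightarrow> r \<in> carrier R \<Longrightarrow> r \<otimes> x \<in> jacobson R"
  and jacobson_add: "x \<in> jacobson R \<Longrightarrow> y \<in> jacobson R \<Longrightarrow> x \<oplus> y \<in> jacobson R"
  and jacobson_a_inv: "x \<in> jacobson R \<Longrightarrow> \<ominus> x \<in> jacobson R"
  and jacobson_zero: "\<zero> \<in> jacobson R"
  using jacobson_left_ideal by (simp_all add: left_ideal_def)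

lemma jacobson_one_minus_l_invertible:
  assumes x: "x \<in> jacobson R" and y: "y \<in> carrier R"
  shows "\<exists>z\<in>carrier R. z \<otimes> (\<one> \<ominus> y \<otimes> x) = \<one>"
proof (rule ccontr)
  define a where "a = \<one> \<ominus> y \<otimes> x"
  assume "\<not> (\<exists>z\<in>carrier R. z \<otimes> (\<one> \<ominus> y \<otimes> x) = \<one>)"
  then have no_inverse: "\<And>t. t \<in> carrier R \<Longrightarrow> t \<otimes> a \<noteq> \<one>" by (auto simp: a_def)
  have xc: "x \<in> carrier R" using x jacobson_subset by auto
  have ac: "a \<in> carrier R" using xc y by (simp add: a_def)
  let ?L = "{m \<oplus> t \<otimes> a | m t. m \<in> {\<zero>} \<and> t \<in> carrier R}"
  have "\<one> \<notin> ?L"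
  proof
    assume "\<one> \<in> ?L"
    then obtain t where t: "t \<in> carrier R" "\<one> = \<zero> \<oplus> t \<otimes> a" by blast
    then have "t \<otimes> a = \<one>" using ac by simp
    with no_inverse t(1) show False by blast
  qed
  then obtain M where M: "maximal_left_ideal R M" and LM: "?L \<subseteq> M"
    using left_ideal_extends_to_maximal left_ideal_add_left_multiples[OF left_ideal_zero ac]
    by blast
  have M_ideal: "left_ideal R M" using M by (simp add: maximal_left_ideal_def)
  have "a = \<zero> \<oplus> \<one> \<otimes> a" using ac by simp
  then have "a \<in> ?L" by blast
  then have "a \<in> M" using LM by blast
  moreover have "y \<otimes> x \<in> M" using M M_ideal x y by (auto simp: jacobson_def left_ideal_def)
  ultimately have "a \<oplus> y \<otimes> x \<in> M" using M_ideal by (simp add: left_ideal_def)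
  moreover have "a \<oplus> y \<otimes> x = \<one>" using xc y by (simp add: a_def minus_eq a_assoc l_neg)
  ultimately show False
    using M left_ideal_one_imp_carrier by (auto simp: maximal_left_ideal_def)
qed

lemma one_minus_jacobson_Units:
  assumes j: "j \<in> jacobson R" shows "\<one> \<ominus> j \<in> Units R"
proof -
  have jc: "j \<in> carrier R" using j jacobson_subset by auto
  obtain z where z: "z \<in> carrier R" "z \<otimes> (\<one> \<ominus> j) = \<one>"
    using jacobson_one_minus_l_invertible[OF j one_closed] jc by auto
  have zj: "\<ominus> (z \<otimes> j) \<in> jacobson R" using jacobson_l_closed[OF j z(1)] jacobson_a_inv by blast
  obtain z' where z': "z' \<in> carrier R" "z' \<otimes> (\<one> \<ominus> \<ominus> (z \<otimes> j)) = \<one>"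
    using jacobson_one_minus_l_invertible[OF zj one_closed] jc z by auto
  \<comment> \<open>z = 1 + zj is itself of the form 1 - (jacobson element), so it has a left inverse too\<close>
  have "z = z \<otimes> (\<one> \<ominus> j) \<oplus> z \<otimes> j" using z(1) jc
    by (simp add: minus_eq r_distr r_minus a_assoc l_neg)
  also have "\<dots> = \<one> \<ominus> \<ominus> (z \<otimes> j)" using z jc by (simp add: minus_eq)
  finally have z'z: "z' \<otimes> z = \<one>" using z' by simp
  have "z' = (z' \<otimes> z) \<otimes> (\<one> \<ominus> j)" using z z' jc by (simp add: m_assoc)
  then have "(\<one> \<ominus> j) \<otimes> z = \<one>" using z'z jc by simp
  then show ?thesis using z jc by (intro UnitsI[of _ z]) auto
qed

lemma in_maximal_left_ideal_if_quasi_regular: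
  assumes x: "x \<in> carrier R" and qr: "\<And>y. y \<in> carrier R \<Longrightarrow> \<one> \<ominus> y \<otimes> x \<in> Units R"
    and M: "maximal_left_ideal R M"
  shows "x \<in> M"
proof (rule ccontr)
  assume "x \<notin> M"
  have M_ideal: "left_ideal R M" using M by (simp add: maximal_left_ideal_def)
  let ?K = "{m \<oplus> t \<otimes> x | m t. m \<in> M \<and> t \<in> carrier R}"
  have "?K = carrier R"
  proof -
    have "m = m \<oplus> \<zero> \<otimes> x" if "m \<in> M" for m using that M_ideal x by (auto simp: left_ideal_def)
    then have "M \<subseteq> ?K" by blast
    moreover have "x = \<zero> \<oplus> \<one> \<otimes> x" using x by simp
    then have "x \<in> ?K" using M_ideal by (force simp: left_ideal_def)
    ultimately show ?thesis
      using M \<open>x \<notin> M\<close> left_ideal_add_left_multiples[OF M_ideal x]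
      unfolding maximal_left_ideal_def by blast
  qed
  then obtain m t where mt: "\<one> = m \<oplus> t \<otimes> x" "m \<in> M" "t \<in> carrier R" by blast
  have mc: "m \<in> carrier R" using mt M_ideal by (auto simp: left_ideal_def)
  have "m = \<one> \<ominus> t \<otimes> x" using mt mc x by (simp add: minus_eq a_assoc r_neg)
  then have m_unit: "m \<in> Units R" using qr mt(3) by simp
  then have "inv m \<otimes> m \<in> M"
    using M_ideal mt(2) Units_inv_closed unfolding left_ideal_def by blast
  then have "\<one> \<in> M" using m_unit by simp
  then show False using M left_ideal_one_imp_carrier by (auto simp: maximal_left_ideal_def)
qed

lemma jacobson_eq_quasi_regular:
  "jacobson R = {x \<in> carrier R. \<forall>y\<in>carrier R. \<one> \<ominus> y \<otimes> x \<in> Units R}"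
proof
  show "jacobson R \<subseteq> {x \<in> carrier R. \<forall>y\<in>carrier R. \<one> \<ominus> y \<otimes> x \<in> Units R}"
  proof
    fix x assume x: "x \<in> jacobson R"
    then show "x \<in> {x \<in> carrier R. \<forall>y\<in>carrier R. \<one> \<ominus> y \<otimes> x \<in> Units R}"
      using jacobson_subset jacobson_l_closed[OF x] one_minus_jacobson_Units by auto
  qed
  show "{x \<in> carrier R. \<forall>y\<in>carrier R. \<one> \<ominus> y \<otimes> x \<in> Units R} \<subseteq> jacobson R"
    using in_maximal_left_ideal_if_quasi_regular by (auto simp: jacobson_def)
qed

lemma Units_if_minus_one_jacobson:
  assumes x: "x \<in> carrier R" and "x \<ominus> \<one> \<in> jacobson R"
  shows "x \<in> Units R"
proof -
  have "x = \<one> \<ominus> \<ominus> (x \<ominus> \<one>)" using x by (simp add: minus_eq minus_add a_lcomm r_neg)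
  then show ?thesis using assms one_minus_jacobson_Units jacobson_a_inv by metis
qed

lemma one_minus_nilpotent_Units:
  assumes "x \<in> nilpotents R" shows "\<one> \<ominus> x \<in> Units R"
proof -
  obtain k where n: "x \<in> carrier R" and k: "x [^] (k::nat) = \<zero>"
    using assms by (auto simp: nilpotents_def)
  \<comment> \<open>the partial geometric series inverts 1 - x modulo x^m from both sides\<close>
  have "\<exists>g\<in>carrier R. (\<one> \<ominus> x) \<otimes> g = \<one> \<ominus> x [^] m \<and> g \<otimes> (\<one> \<ominus> x) = \<one> \<ominus> x [^] m"
    for m :: nat
  proof (induction m)
    case 0 then show ?case by (auto intro!: bexI[of _ \<zero>] simp: n minus_eq r_neg)
  next
    case (Suc m)
    then obtain g where g: "g \<in> carrier R" "(\<one> \<ominus> x) \<otimes> g = \<one> \<ominus> x [^] m"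
      "g \<otimes> (\<one> \<ominus> x) = \<one> \<ominus> x [^] m" by blast
    have step: "\<one> \<ominus> x \<oplus> x \<otimes> (\<one> \<ominus> x [^] m) = \<one> \<ominus> x [^] Suc m"
      using n nat_pow_closed[OF n, of m] unfolding nat_pow_Suc2[OF n]
      by (simp add: minus_eq r_distr r_minus a_assoc r_neg1)
    have "x \<otimes> ((\<one> \<ominus> x) \<otimes> g) = (\<one> \<ominus> x) \<otimes> (x \<otimes> g)" using n g(1)
      by (simp add: m_assoc[symmetric] minus_eq r_distr l_distr r_minus l_minus)
    then have "(\<one> \<ominus> x) \<otimes> (\<one> \<oplus> x \<otimes> g) = \<one> \<ominus> x \<oplus> x \<otimes> ((\<one> \<ominus> x) \<otimes> g)"
      using n g by (simp add: r_distr)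
    then have e1: "(\<one> \<ominus> x) \<otimes> (\<one> \<oplus> x \<otimes> g) = \<one> \<ominus> x [^] Suc m"
      by (simp only: g(2) step)
    have "(\<one> \<oplus> x \<otimes> g) \<otimes> (\<one> \<ominus> x) = \<one> \<ominus> x \<oplus> x \<otimes> (g \<otimes> (\<one> \<ominus> x))"
      using n g by (simp add: l_distr m_assoc)
    then have e2: "(\<one> \<oplus> x \<otimes> g) \<otimes> (\<one> \<ominus> x) = \<one> \<ominus> x [^] Suc m"
      by (simp only: g(3) step)
    show ?case using e1 e2 g n by (intro bexI[of _ "\<one> \<oplus> x \<otimes> g"]) auto
  qed
  from this[of k] obtain g where g: "g \<in> carrier R" "(\<one> \<ominus> x) \<otimes> g = \<one>" "g \<otimes> (\<one> \<ominus> x) = \<one>"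
    using k by (auto simp: minus_eq)
  then show ?thesis using n by (intro UnitsI[of _ g]) auto
qed

lemma a_inv_pow: "x \<in> carrier R \<Longrightarrow> (\<ominus> x) [^] (k::nat) = (\<ominus> \<one>) [^] k \<otimes> x [^] k"
proof (induction k)
  case (Suc k)
  then show ?case by (simp add: m_assoc l_minus r_minus nat_pow_Suc2 del: nat_pow_Suc)
qed simp

lemma nilpotents_a_inv:
  assumes "x \<in> nilpotents R" shows "\<ominus> x \<in> nilpotents R"
proof -
  obtain k where x: "x \<in> carrier R" "x [^] (k::nat) = \<zero>" using assms by (auto simp: nilpotents_def)
  then have "(\<ominus> x) [^] k = \<zero>" using a_inv_pow[OF x(1), of k] by simp
  then show ?thesis using x by (auto simp: nilpotents_def)
qed

lemma quasi_regular_pm: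
  assumes "w \<in> nilpotents R \<or> w \<in> jacobson R"
  shows "\<one> \<ominus> w \<in> Units R" and "\<one> \<ominus> \<ominus> w \<in> Units R"
proof -
  show "\<one> \<ominus> w \<in> Units R"
    using assms one_minus_nilpotent_Units one_minus_jacobson_Units by blast
  have "\<ominus> w \<in> nilpotents R \<or> \<ominus> w \<in> jacobson R"
    using assms nilpotents_a_inv jacobson_a_inv by blast
  then show "\<one> \<ominus> \<ominus> w \<in> Units R"
    using one_minus_nilpotent_Units one_minus_jacobson_Units by blast
qed

lemma Units_idempotent_eq_one:
  assumes e: "e \<in> Units R" "e \<otimes> e = e" shows "e = \<one>"
proof -
  have "e = inv e \<otimes> (e \<otimes> e)" using e(1) by (simp add: m_assoc[symmetric] Units_closed)
  also have "\<dots> = \<one>" using e by simp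
  finally show ?thesis .
qed

lemma idempotent_one_minus:
  assumes e: "e \<in> carrier R" "e \<otimes> e = e"
  shows "(\<one> \<ominus> e) \<otimes> (\<one> \<ominus> e) = \<one> \<ominus> e"
proof -
  have "(\<one> \<ominus> e) \<otimes> (\<one> \<ominus> e) = \<one> \<oplus> (\<ominus> e \<oplus> (\<ominus> e \<oplus> e \<otimes> e))"
    using e(1) by (simp add: minus_eq l_distr r_distr l_minus r_minus a_assoc minus_add)
  then show ?thesis using e by (simp add: minus_eq l_neg)
qed

lemma idempotent_nontrivial_if_quasi_regular:
  assumes a: "a \<in> carrier R" and e: "e \<in> carrier R"
    and "a \<notin> Units R" and "\<one> \<ominus> a \<notin> Units R"
    and "\<one> \<ominus> (a \<ominus> e) \<in> Units R" and "\<one> \<ominus> \<ominus> (a \<ominus> e) \<in> Units R"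
  shows "e \<noteq> \<zero>" and "e \<noteq> \<one>"
proof -
  have "\<one> \<ominus> (a \<ominus> \<zero>) = \<one> \<ominus> a" using a by (simp add: minus_eq)
  then show "e \<noteq> \<zero>" using assms by auto
  have "\<one> \<ominus> \<ominus> (a \<ominus> \<one>) = a"
    using a by (simp add: minus_eq minus_add minus_minus a_lcomm r_neg)
  then show "e \<noteq> \<one>" using assms by auto
qed

lemma Units_conj_mult:
  "P \<in> Units R \<Longrightarrow> x \<in> carrier R \<Longrightarrow> y \<in> carrier R \<Longrightarrow>
    (inv P \<otimes> x \<otimes> P) \<otimes> (inv P \<otimes> y \<otimes> P) = inv P \<otimes> (x \<otimes> y) \<otimes> P"
  by (simp add: m_assoc Units_closed)

lemma Units_conj_pow:
  "P \<in> Units R \<Longrightarrow> w \<in> carrier R \<Longrightarrow> (inv P \<otimes> w \<otimes> P) [^] (n::nat) = inv P \<otimes> w [^] n \<otimes> P"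
  by (induction n) (simp_all add: m_assoc Units_closed)

lemma Units_conj_nilpotents:
  assumes P: "P \<in> Units R" and w: "w \<in> nilpotents R"
  shows "inv P \<otimes> w \<otimes> P \<in> nilpotents R"
proof -
  obtain n where "w \<in> carrier R" "w [^] (n::nat) = \<zero>" using w by (auto simp: nilpotents_def)
  then show ?thesis
    using Units_conj_pow[OF P] P Units_closed[OF P] by (auto simp: nilpotents_def intro!: exI[of _ n])
qed

lemma Units_conj_jacobson:
  assumes P: "P \<in> Units R" and w: "w \<in> jacobson R"
  shows "inv P \<otimes> w \<otimes> P \<in> jacobson R"
proof -
  have wc: "w \<in> carrier R" using w jacobson_subset by auto
  have "\<one> \<ominus> y \<otimes> (inv P \<otimes> w \<otimes> P) \<in> Units R" if y: "y \<in> carrier R" for y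
  proof -
    have "inv P \<otimes> (\<one> \<ominus> (P \<otimes> y \<otimes> inv P) \<otimes> w) \<otimes> P = \<one> \<ominus> y \<otimes> (inv P \<otimes> w \<otimes> P)"
      using wc y P Units_closed[OF P] by (simp add: minus_eq r_distr l_distr r_minus l_minus m_assoc)
    moreover have "P \<otimes> y \<otimes> inv P \<in> carrier R" using y P Units_closed[OF P] by simp
    then have "\<one> \<ominus> (P \<otimes> y \<otimes> inv P) \<otimes> w \<in> Units R"
      using w unfolding jacobson_eq_quasi_regular by blast
    moreover have "inv P \<otimes> (\<one> \<ominus> (P \<otimes> y \<otimes> inv P) \<otimes> w) \<otimes> P \<in> Units R"
      using P calculation(2) by (intro Units_m_closed Units_inv_Units)
    ultimately show ?thesis by simp
  qed
  then show ?thesis using wc P Units_closed[OF P] by (simp add: jacobson_eq_quasi_regular)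
qed

lemma Units_conj_inverse:
  "P \<in> Units R \<Longrightarrow> w \<in> carrier R \<Longrightarrow> inv (inv P) \<otimes> (inv P \<otimes> w \<otimes> P) \<otimes> inv P = w"
  by (simp add: m_assoc Units_closed)

lemma Units_conj_jacobson_iff:
  "P \<in> Units R \<Longrightarrow> w \<in> carrier R \<Longrightarrow> inv P \<otimes> w \<otimes> P \<in> jacobson R \<longleftrightarrow> w \<in> jacobson R"
  by (metis Units_conj_inverse Units_conj_jacobson Units_inv_Units)

lemma Units_conj_nilpotents_iff:
  "P \<in> Units R \<Longrightarrow> w \<in> carrier R \<Longrightarrow> inv P \<otimes> w \<otimes> P \<in> nilpotents R \<longleftrightarrow> w \<in> nilpotents R"
  by (metis Units_conj_inverse Units_conj_nilpotents Units_inv_Units)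

lemma Units_conj_commute:
  assumes P: "P \<in> Units R" and c: "w \<in> carrier R" "e \<in> carrier R" "E \<in> carrier R"
    and we: "w \<otimes> e = e \<otimes> w" and eP: "e \<otimes> P = P \<otimes> E"
  shows "(inv P \<otimes> w \<otimes> P) \<otimes> E = E \<otimes> (inv P \<otimes> w \<otimes> P)"
proof -
  have "inv P \<otimes> (P \<otimes> E) = E" using P c by simp
  then have E: "E = inv P \<otimes> e \<otimes> P" using eP P c Units_closed[OF P] by (simp add: m_assoc)
  show ?thesis
    unfolding E by (simp only: Units_conj_mult[OF P c(1,2)] Units_conj_mult[OF P c(2,1)] we)
qed

end

section \<open>Local rings\<close>

locale loc_ring = ring +
  assumes local_ring: "local_ring R"
begin

lemma one_notin_jacobson: "\<one> \<notin> jacobson R"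
  using local_ring by (simp add: local_ring_def)

lemma one_neq_zero: "\<one> \<noteq> \<zero>"
  using one_notin_jacobson jacobson_zero by auto

lemma jacobson_not_Units: "x \<in> jacobson R \<Longrightarrow> x \<notin> Units R"
  using jacobson_l_closed[of x "inv x"] one_notin_jacobson by auto

lemma Units_if_notin_jacobson:
  assumes x: "x \<in> carrier R" "x \<notin> jacobson R" shows "x \<in> Units R"
proof -
  obtain y where y: "y \<in> carrier R" "x \<otimes> y \<ominus> \<one> \<in> jacobson R" "y \<otimes> x \<ominus> \<one> \<in> jacobson R"
    using local_ring x unfolding local_ring_def by blast
  then have xy: "x \<otimes> y \<in> Units R" and yx: "y \<otimes> x \<in> Units R"
    using x Units_if_minus_one_jacobson by auto
  define a where "a = inv (y \<otimes> x) \<otimes> y"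
  define b where "b = y \<otimes> inv (x \<otimes> y)"
  have ax: "a \<otimes> x = \<one>" using yx x y by (simp add: a_def m_assoc)
  have xb: "x \<otimes> b = \<one>" using xy x y by (simp add: b_def m_assoc[symmetric])
  have ab: "a \<in> carrier R" "b \<in> carrier R" using xy yx y by (auto simp: a_def b_def)
  have "a = a \<otimes> (x \<otimes> b)" using xb ab by simp
  also have "\<dots> = b" using ab x by (simp add: m_assoc[symmetric] ax)
  finally show ?thesis using ax xb ab x by (intro UnitsI[of _ b]) auto
qed

lemma jacobson_r_closed:
  assumes x: "x \<in> jacobson R" and r: "r \<in> carrier R" shows "x \<otimes> r \<in> jacobson R"
proof (rule ccontr)
  assume "x \<otimes> r \<notin> jacobson R"
  have xc: "x \<in> carrier R" using x jacobson_subset by auto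
  then have u: "x \<otimes> r \<in> Units R" using Units_if_notin_jacobson \<open>x \<otimes> r \<notin> jacobson R\<close> r by auto
  define z where "z = r \<otimes> inv (x \<otimes> r)"
  have zc: "z \<in> carrier R" using u r by (simp add: z_def)
  have xz: "x \<otimes> z = \<one>" using u r xc by (simp add: z_def m_assoc[symmetric])
  then have "z \<notin> jacobson R" using jacobson_l_closed[of z x] xc one_notin_jacobson by auto
  then have zu: "z \<in> Units R" using Units_if_notin_jacobson zc by auto
  have "x = x \<otimes> z \<otimes> inv z" using zu xc zc by (simp add: m_assoc)
  also have "\<dots> = inv z" using xz zu by simp
  finally show False using zu x jacobson_not_Units by auto
qed

lemma nilpotents_subset_jacobson: "nilpotents R \<subseteq> jacobson R"
proof
  fix x assume "x \<in> nilpotents R"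
  then obtain k where x: "x \<in> carrier R" "x [^] (k::nat) = \<zero>" by (auto simp: nilpotents_def)
  show "x \<in> jacobson R"
  proof (rule ccontr)
    assume "x \<notin> jacobson R"
    then have "x [^] k \<in> Units R" using Units_if_notin_jacobson x(1) by (induction k) auto
    then show False using x(2) jacobson_zero jacobson_not_Units by auto
  qed
qed

lemma idempotent_eq_zero_or_one:
  assumes p: "p \<in> carrier R" "p \<otimes> p = p" shows "p = \<zero> \<or> p = \<one>"
proof (cases "p \<in> jacobson R")
  case True
  then have u: "\<one> \<ominus> p \<in> Units R" by (rule one_minus_jacobson_Units)
  have "p \<otimes> (\<one> \<ominus> p) = \<zero>" using p by (simp add: minus_eq r_distr r_minus r_neg)
  then have "p = \<zero> \<otimes> inv (\<one> \<ominus> p)" using p u by (metis Units_closed Units_inv_closed Units_r_inv m_assoc r_one)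
  then show ?thesis using u by simp
next
  case False
  then show ?thesis using p Units_if_notin_jacobson Units_idempotent_eq_one by blast
qed

end

section \<open>The ring M_2(R;s)\<close>

locale m2s = ring +
  fixes s assumes s_central: "central_elem R s"
begin

abbreviation T where "T \<equiv> M2s R s"

abbreviation diag :: "'a \<Rightarrow> 'a \<Rightarrow> 'a \<times> 'a \<times> 'a \<times> 'a" where
  "diag x y \<equiv> (x, \<zero>, \<zero>, y)"

lemma s_closed [simp]: "s \<in> carrier R"
  using s_central by (simp add: central_elem_def)

lemma s_comm: "x \<in> carrier R \<Longrightarrow> s \<otimes> x = x \<otimes> s"
  using s_central by (simp add: central_elem_def)

definition s2 :: "'a \<Rightarrow> 'a" where "s2 x = (s \<otimes> s) \<otimes> x"

lemma s2_closed [simp]: "x \<in> carrier R \<Longrightarrow> s2 x \<in> carrier R"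
  by (simp add: s2_def)

lemma s2_mult_right [simp]: "x \<in> carrier R \<Longrightarrow> y \<in> carrier R \<Longrightarrow> x \<otimes> s2 y = s2 (x \<otimes> y)"
  unfolding s2_def by (metis m_assoc s_closed s_comm m_closed)

lemma s2_mult_left [simp]: "x \<in> carrier R \<Longrightarrow> y \<in> carrier R \<Longrightarrow> s2 x \<otimes> y = s2 (x \<otimes> y)"
  unfolding s2_def by (simp add: m_assoc)

lemma s2_add [simp]: "x \<in> carrier R \<Longrightarrow> y \<in> carrier R \<Longrightarrow> s2 (x \<oplus> y) = s2 x \<oplus> s2 y"
  unfolding s2_def by (simp add: r_distr)

lemma s2_a_inv [simp]: "x \<in> carrier R \<Longrightarrow> s2 (\<ominus> x) = \<ominus> s2 x"
  unfolding s2_def by (simp add: r_minus)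

lemma s2_zero [simp]: "s2 \<zero> = \<zero>"
  by (simp add: s2_def)

lemma M2s_carrier: "carrier T = carrier R \<times> carrier R \<times> carrier R \<times> carrier R"
  by (simp add: M2s_def)

lemma M2s_mult:
  "\<lbrakk>a \<in> carrier R; b \<in> carrier R; c \<in> carrier R; d \<in> carrier R;
    a' \<in> carrier R; b' \<in> carrier R; c' \<in> carrier R; d' \<in> carrier R\<rbrakk> \<Longrightarrow>
   (a, b, c, d) \<otimes>\<^bsub>T\<^esub> (a', b', c', d') =
   (a \<otimes> a' \<oplus> s2 (b \<otimes> c'), a \<otimes> b' \<oplus> b \<otimes> d', c \<otimes> a' \<oplus> d \<otimes> c', s2 (c \<otimes> b') \<oplus> d \<otimes> d')"
  by (simp add: M2s_def M2s_mult_def s2_def m_assoc)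

lemma M2s_add: "(a, b, c, d) \<oplus>\<^bsub>T\<^esub> (a', b', c', d') = (a \<oplus> a', b \<oplus> b', c \<oplus> c', d \<oplus> d')"
  by (simp add: M2s_def M2s_add_def)

lemma M2s_one: "\<one>\<^bsub>T\<^esub> = diag \<one> \<one>"
  by (simp add: M2s_def)

lemma M2s_zero: "\<zero>\<^bsub>T\<^esub> = diag \<zero> \<zero>"
  by (simp add: M2s_def)

lemmas M2s_simps = M2s_carrier M2s_mult M2s_add M2s_one M2s_zero

lemma M2s_ring: "ring T"
proof (rule ringI)
  show "abelian_group T"
    by (rule abelian_groupI) (auto simp: M2s_simps a_ac)
  show "monoid T"
    by (rule monoidI) (auto simp: M2s_simps m_assoc l_distr r_distr a_ac)
qed (auto simp: M2s_simps m_assoc l_distr r_distr a_ac)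

sublocale M: ring T
  by (rule M2s_ring)

lemma M2s_a_inv:
  "\<lbrakk>a \<in> carrier R; b \<in> carrier R; c \<in> carrier R; d \<in> carrier R\<rbrakk> \<Longrightarrow>
   \<ominus>\<^bsub>T\<^esub> (a, b, c, d) = (\<ominus> a, \<ominus> b, \<ominus> c, \<ominus> d)"
  by (rule M.minus_equality) (auto simp: M2s_simps l_neg)

lemma M2s_minus:
  "\<lbrakk>a \<in> carrier R; b \<in> carrier R; c \<in> carrier R; d \<in> carrier R;
    a' \<in> carrier R; b' \<in> carrier R; c' \<in> carrier R; d' \<in> carrier R\<rbrakk> \<Longrightarrow>
   (a, b, c, d) \<ominus>\<^bsub>T\<^esub> (a', b', c', d') = (a \<ominus> a', b \<ominus> b', c \<ominus> c', d \<ominus> d')"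
  by (simp add: M.minus_eq M2s_a_inv M2s_add minus_eq)

lemma diag_pow:
  "x \<in> carrier R \<Longrightarrow> y \<in> carrier R \<Longrightarrow> diag x y [^]\<^bsub>T\<^esub> (n::nat) = diag (x [^] n) (y [^] n)"
  by (induction n) (auto simp: M2s_simps)

lemma diag_nilpotents_iff:
  assumes xy: "x \<in> carrier R" "y \<in> carrier R"
  shows "diag x y \<in> nilpotents T \<longleftrightarrow> x \<in> nilpotents R \<and> y \<in> nilpotents R"
proof
  assume "diag x y \<in> nilpotents T"
  then obtain n where "diag x y [^]\<^bsub>T\<^esub> (n::nat) = \<zero>\<^bsub>T\<^esub>" by (auto simp: nilpotents_def)
  then show "x \<in> nilpotents R \<and> y \<in> nilpotents R"
    using xy by (auto simp: diag_pow M2s_zero nilpotents_def)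
next
  assume "x \<in> nilpotents R \<and> y \<in> nilpotents R"
  then obtain n m where n: "x [^] (n::nat) = \<zero>" and m: "y [^] (m::nat) = \<zero>"
    by (auto simp: nilpotents_def)
  have "x [^] (n + m) = \<zero>" "y [^] (n + m) = \<zero>"
    using n m xy by (simp_all add: nat_pow_mult[symmetric])
  then show "diag x y \<in> nilpotents T"
    using xy by (auto simp: diag_pow M2s_simps nilpotents_def intro!: exI[of _ "n + m"])
qed

lemma commute_diag_unit_vector_imp_diag:
  assumes w: "w \<in> carrier T" and E: "E = diag \<one> \<zero> \<or> E = diag \<zero> \<one>"
    and comm: "E \<otimes>\<^bsub>T\<^esub> w = w \<otimes>\<^bsub>T\<^esub> E"
  shows "\<exists>x y. w = diag x y \<and> x \<in> carrier R \<and> y \<in> carrier R"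
proof -
  obtain a b c d where "w = (a, b, c, d)" "a \<in> carrier R" "b \<in> carrier R" "c \<in> carrier R" "d \<in> carrier R"
    using w by (cases w) (auto simp: M2s_carrier)
  with E comm show ?thesis by (auto simp: M2s_simps)
qed

lemma lower_unitriangular_Units: "c \<in> carrier R \<Longrightarrow> (\<one>, \<zero>, c, \<one>) \<in> Units T"
  by (rule M.UnitsI[of _ "(\<one>, \<zero>, \<ominus> c, \<one>)"]) (auto simp: M2s_simps l_neg r_neg)

lemma upper_unitriangular_Units: "b \<in> carrier R \<Longrightarrow> (\<one>, b, \<zero>, \<one>) \<in> Units T"
  by (rule M.UnitsI[of _ "(\<one>, \<ominus> b, \<zero>, \<one>)"]) (auto simp: M2s_simps l_neg r_neg)

lemma diag_Units:
  assumes "a \<in> Units R" "d \<in> Units R" shows "diag a d \<in> Units T"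
  using assms Units_closed[OF assms(1)] Units_closed[OF assms(2)]
  by (intro M.UnitsI[of _ "diag (inv a) (inv d)"]) (auto simp: M2s_simps)

lemma Units_if_Schur_complement_Units:
  assumes a: "a \<in> Units R" and bcd: "b \<in> carrier R" "c \<in> carrier R" "d \<in> carrier R"
    and Schur: "d \<ominus> s2 (c \<otimes> inv a \<otimes> b) \<in> Units R"
  shows "(a, b, c, d) \<in> Units T"
proof -
  define \<sigma> where "\<sigma> = d \<ominus> s2 (c \<otimes> inv a \<otimes> b)"
  have ac: "a \<in> carrier R" "inv a \<in> carrier R" and \<sigma>c: "\<sigma> \<in> carrier R"
    using a Schur by (auto simp: \<sigma>_def)
  \<comment> \<open>block LDU decomposition\<close>
  have "(\<one>, \<zero>, c \<otimes> inv a, \<one>) \<otimes>\<^bsub>T\<^esub> diag a \<sigma> \<otimes>\<^bsub>T\<^esub> (\<one>, inv a \<otimes> b, \<zero>, \<one>) = (a, b, c, d)"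
    using ac bcd \<sigma>c a
    by (simp add: M2s_simps m_assoc \<sigma>_def minus_eq a_ac r_neg1 r_neg2 r_neg)
  moreover have "(\<one>, \<zero>, c \<otimes> inv a, \<one>) \<otimes>\<^bsub>T\<^esub> diag a \<sigma> \<otimes>\<^bsub>T\<^esub> (\<one>, inv a \<otimes> b, \<zero>, \<one>) \<in> Units T"
    using ac bcd a Schur lower_unitriangular_Units upper_unitriangular_Units diag_Units
    by (simp add: \<sigma>_def)
  ultimately show ?thesis by simp
qed

end

section \<open>M_2(R;s) over a local ring\<close>

locale m2s_local = m2s + loc_ring
begin

lemma M2s_Units_if_congruent_one:
  assumes c: "a \<in> carrier R" "b \<in> carrier R" "c \<in> carrier R" "d \<in> carrier R"
    and J: "a \<ominus> \<one> \<in> jacobson R" "b \<in> jacobson R" "c \<in> jacobson R" "d \<ominus> \<one> \<in> jacobson R"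
  shows "(a, b, c, d) \<in> Units T"
proof (rule Units_if_Schur_complement_Units)
  show a: "a \<in> Units R" using Units_if_minus_one_jacobson c J by auto
  have "s2 (c \<otimes> inv a \<otimes> b) \<in> jacobson R"
    using J a c unfolding s2_def by (intro jacobson_l_closed jacobson_r_closed) auto
  then have "(d \<ominus> \<one>) \<oplus> \<ominus> s2 (c \<otimes> inv a \<otimes> b) \<in> jacobson R"
    using J(4) jacobson_add jacobson_a_inv by blast
  moreover have "(d \<ominus> \<one>) \<oplus> \<ominus> s2 (c \<otimes> inv a \<otimes> b) = (d \<ominus> s2 (c \<otimes> inv a \<otimes> b)) \<ominus> \<one>"
    using c a by (simp add: minus_eq a_ac)
  ultimately show "d \<ominus> s2 (c \<otimes> inv a \<otimes> b) \<in> Units R"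
    using c a by (intro Units_if_minus_one_jacobson) auto
qed (use c in auto)

lemma diag_not_Units:
  assumes "x \<in> carrier R" shows "diag x \<zero> \<notin> Units T" and "diag \<zero> x \<notin> Units T"
  using assms one_neq_zero by (auto simp: Units_def M2s_simps)

lemma diag_jacobson_iff:
  assumes xy: "x \<in> carrier R" "y \<in> carrier R"
  shows "diag x y \<in> jacobson T \<longleftrightarrow> x \<in> jacobson R \<and> y \<in> jacobson R"
proof
  assume "diag x y \<in> jacobson T"
  then have qr: "\<And>Y. Y \<in> carrier T \<Longrightarrow> \<one>\<^bsub>T\<^esub> \<ominus>\<^bsub>T\<^esub> Y \<otimes>\<^bsub>T\<^esub> diag x y \<in> Units T"
    using M.jacobson_eq_quasi_regular by blast
  show "x \<in> jacobson R \<and> y \<in> jacobson R"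
  proof (rule conjI; rule ccontr)
    assume "x \<notin> jacobson R"
    then have "x \<in> Units R" using Units_if_notin_jacobson xy by auto
    then have "\<one>\<^bsub>T\<^esub> \<ominus>\<^bsub>T\<^esub> diag (inv x) \<zero> \<otimes>\<^bsub>T\<^esub> diag x y = diag \<zero> \<one>"
      using xy by (simp add: M2s_simps M2s_minus minus_eq r_neg)
    then show False using qr[of "diag (inv x) \<zero>"] \<open>x \<in> Units R\<close> diag_not_Units
      by (auto simp: M2s_carrier)
  next
    assume "y \<notin> jacobson R"
    then have "y \<in> Units R" using Units_if_notin_jacobson xy by auto
    then have "\<one>\<^bsub>T\<^esub> \<ominus>\<^bsub>T\<^esub> diag \<zero> (inv y) \<otimes>\<^bsub>T\<^esub> diag x y = diag \<one> \<zero>"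
      using xy by (simp add: M2s_simps M2s_minus minus_eq r_neg)
    then show False using qr[of "diag \<zero> (inv y)"] \<open>y \<in> Units R\<close> diag_not_Units
      by (auto simp: M2s_carrier)
  qed
next
  assume J: "x \<in> jacobson R \<and> y \<in> jacobson R"
  have "\<one>\<^bsub>T\<^esub> \<ominus>\<^bsub>T\<^esub> Y \<otimes>\<^bsub>T\<^esub> diag x y \<in> Units T" if YT: "Y \<in> carrier T" for Y
  proof -
    obtain y1 y2 y3 y4 where Y: "Y = (y1, y2, y3, y4)"
      and c: "y1 \<in> carrier R" "y2 \<in> carrier R" "y3 \<in> carrier R" "y4 \<in> carrier R"
      using YT by (cases Y) (auto simp: M2s_carrier)
    have "\<one>\<^bsub>T\<^esub> \<ominus>\<^bsub>T\<^esub> Y \<otimes>\<^bsub>T\<^esub> diag x y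
        = (\<one> \<ominus> y1 \<otimes> x, \<ominus> (y2 \<otimes> y), \<ominus> (y3 \<otimes> x), \<one> \<ominus> y4 \<otimes> y)"
      using Y c xy by (simp add: M2s_simps M2s_minus minus_eq)
    moreover have "(\<one> \<ominus> y1 \<otimes> x) \<ominus> \<one> = \<ominus> (y1 \<otimes> x)" "(\<one> \<ominus> y4 \<otimes> y) \<ominus> \<one> = \<ominus> (y4 \<otimes> y)"
      using c xy by (simp_all add: minus_eq a_ac r_neg2)
    ultimately show ?thesis
      using c xy J by (auto intro!: M2s_Units_if_congruent_one jacobson_a_inv jacobson_l_closed)
  qed
  then show "diag x y \<in> jacobson T"
    using M.jacobson_eq_quasi_regular xy by (auto simp: M2s_carrier)
qed

lemma idempotent_similar_diag_one_zero:
  assumes e: "e = (p, q, r, u)" "e \<in> carrier T" "e \<otimes>\<^bsub>T\<^esub> e = e" "e \<noteq> \<one>\<^bsub>T\<^esub>"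
    and p: "p \<in> Units R"
  shows "\<exists>P\<in>Units T. e \<otimes>\<^bsub>T\<^esub> P = P \<otimes>\<^bsub>T\<^esub> diag \<one> \<zero>"
proof -
  have c: "p \<in> carrier R" "q \<in> carrier R" "r \<in> carrier R" "u \<in> carrier R"
    using e by (auto simp: M2s_carrier)
  have "e \<otimes>\<^bsub>T\<^esub> e = (p \<otimes> p \<oplus> s2 (q \<otimes> r), p \<otimes> q \<oplus> q \<otimes> u, r \<otimes> p \<oplus> u \<otimes> r, s2 (r \<otimes> q) \<oplus> u \<otimes> u)"
    using c by (simp add: e(1) M2s_mult)
  then have idem: "p \<otimes> p \<oplus> s2 (q \<otimes> r) = p" "p \<otimes> q \<oplus> q \<otimes> u = q" "r \<otimes> p \<oplus> u \<otimes> r = r"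
    "s2 (r \<otimes> q) \<oplus> u \<otimes> u = u"
    using e by auto
  \<comment> \<open>the columns of P are the first column of e and the second column of 1 - e\<close>
  define P where "P = (p, \<ominus> q, r, \<one> \<ominus> u)"
  have "e \<otimes>\<^bsub>T\<^esub> P = (p \<otimes> p \<oplus> s2 (q \<otimes> r), q \<ominus> (p \<otimes> q \<oplus> q \<otimes> u), r \<otimes> p \<oplus> u \<otimes> r, u \<ominus> (s2 (r \<otimes> q) \<oplus> u \<otimes> u))"
    using c unfolding e(1) P_def by (simp add: M2s_mult r_distr r_minus minus_eq minus_add a_ac)
  also have "\<dots> = P \<otimes>\<^bsub>T\<^esub> diag \<one> \<zero>"
    using c by (simp add: idem P_def M2s_mult minus_eq r_neg)
  finally have eP: "e \<otimes>\<^bsub>T\<^esub> P = P \<otimes>\<^bsub>T\<^esub> diag \<one> \<zero>" .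
  define \<sigma> where "\<sigma> = (\<one> \<ominus> u) \<ominus> s2 (r \<otimes> inv p \<otimes> (\<ominus> q))"
  have "P \<in> Units T"
  proof (cases "\<sigma> \<in> jacobson R")
    case False
    then show ?thesis
      using p c Units_if_notin_jacobson unfolding P_def \<sigma>_def
      by (intro Units_if_Schur_complement_Units) auto
  next
    case True
    \<comment> \<open>then the Schur complement of e itself, which is 1 - \<sigma>, is a unit\<close>
    have "\<one> \<ominus> \<sigma> = u \<ominus> s2 (r \<otimes> inv p \<otimes> q)"
      using c p unfolding \<sigma>_def by (simp add: r_minus minus_eq minus_add a_assoc r_neg2)
    then have "e \<in> Units T"
      using one_minus_jacobson_Units[OF True] p c unfolding e(1)
      by (intro Units_if_Schur_complement_Units) auto
    then show ?thesis using M.Units_idempotent_eq_one e by blast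
  qed
  with eP show ?thesis by blast
qed

lemma idempotent_similar_unit_vector:
  assumes e: "e \<in> carrier T" "e \<otimes>\<^bsub>T\<^esub> e = e" "e \<noteq> \<zero>\<^bsub>T\<^esub>" "e \<noteq> \<one>\<^bsub>T\<^esub>"
  shows "\<exists>P\<in>Units T. e \<otimes>\<^bsub>T\<^esub> P = P \<otimes>\<^bsub>T\<^esub> diag \<one> \<zero> \<or> e \<otimes>\<^bsub>T\<^esub> P = P \<otimes>\<^bsub>T\<^esub> diag \<zero> \<one>"
proof -
  obtain p q r u where eq: "e = (p, q, r, u)"
    and c: "p \<in> carrier R" "q \<in> carrier R" "r \<in> carrier R" "u \<in> carrier R"
    using e(1) by (cases e) (auto simp: M2s_carrier)
  show ?thesis
  proof (cases "p \<in> jacobson R")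
    case False
    then show ?thesis
      using idempotent_similar_diag_one_zero[OF eq e(1,2,4)] Units_if_notin_jacobson c by blast
  next
    case True
    \<comment> \<open>then the complementary idempotent has a unit corner\<close>
    define f where "f = \<one>\<^bsub>T\<^esub> \<ominus>\<^bsub>T\<^esub> e"
    have f_eq: "f = (\<one> \<ominus> p, \<ominus> q, \<ominus> r, \<one> \<ominus> u)"
      using c by (simp add: f_def eq M2s_one M2s_minus minus_eq)
    have f: "f \<in> carrier T" "f \<otimes>\<^bsub>T\<^esub> f = f" using e by (simp_all add: f_def M.idempotent_one_minus)
    have e_eq: "e = \<one>\<^bsub>T\<^esub> \<ominus>\<^bsub>T\<^esub> f" using e(1) unfolding f_def by algebra
    then have "f \<noteq> \<one>\<^bsub>T\<^esub>" using e(3) by auto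
    then obtain P where P: "P \<in> Units T" "f \<otimes>\<^bsub>T\<^esub> P = P \<otimes>\<^bsub>T\<^esub> diag \<one> \<zero>"
      using idempotent_similar_diag_one_zero[OF f_eq f] one_minus_jacobson_Units[OF True] by blast
    have Pc: "P \<in> carrier T" using P(1) by blast
    have E: "diag \<one> \<zero> \<in> carrier T" by (simp add: M2s_carrier)
    have "e \<otimes>\<^bsub>T\<^esub> P = P \<ominus>\<^bsub>T\<^esub> f \<otimes>\<^bsub>T\<^esub> P" unfolding e_eq using f(1) Pc by algebra
    also have "\<dots> = P \<otimes>\<^bsub>T\<^esub> (\<one>\<^bsub>T\<^esub> \<ominus>\<^bsub>T\<^esub> diag \<one> \<zero>)"
      unfolding P(2) using Pc E by (simp add: M.minus_eq M.r_distr M.r_minus)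
    also have "\<one>\<^bsub>T\<^esub> \<ominus>\<^bsub>T\<^esub> diag \<one> \<zero> = diag \<zero> \<one>"
      by (simp add: M2s_one M2s_minus minus_eq r_neg)
    finally show ?thesis using P(1) by blast
  qed
qed

lemma similar_diag_if_commute_idempotent:
  assumes e: "e \<in> carrier T" "e \<otimes>\<^bsub>T\<^esub> e = e" "e \<noteq> \<zero>\<^bsub>T\<^esub>" "e \<noteq> \<one>\<^bsub>T\<^esub>"
    and w: "w \<in> carrier T" "w \<otimes>\<^bsub>T\<^esub> e = e \<otimes>\<^bsub>T\<^esub> w"
  shows "\<exists>P\<in>Units T. \<exists>x y. x \<in> carrier R \<and> y \<in> carrier R \<and> inv\<^bsub>T\<^esub> P \<otimes>\<^bsub>T\<^esub> w \<otimes>\<^bsub>T\<^esub> P = diag x y"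
proof -
  obtain P E where P: "P \<in> Units T" "e \<otimes>\<^bsub>T\<^esub> P = P \<otimes>\<^bsub>T\<^esub> E"
    and E: "E = diag \<one> \<zero> \<or> E = diag \<zero> \<one>"
    using idempotent_similar_unit_vector[OF e] by blast
  have "E \<in> carrier T" using E by (auto simp: M2s_carrier)
  then have "E \<otimes>\<^bsub>T\<^esub> (inv\<^bsub>T\<^esub> P \<otimes>\<^bsub>T\<^esub> w \<otimes>\<^bsub>T\<^esub> P) = (inv\<^bsub>T\<^esub> P \<otimes>\<^bsub>T\<^esub> w \<otimes>\<^bsub>T\<^esub> P) \<otimes>\<^bsub>T\<^esub> E"
    using M.Units_conj_commute[OF P(1) w(1) e(1) _ w(2) P(2)] by simp
  moreover have "inv\<^bsub>T\<^esub> P \<otimes>\<^bsub>T\<^esub> w \<otimes>\<^bsub>T\<^esub> P \<in> carrier T" using P(1) w(1) by blast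
  ultimately show ?thesis using commute_diag_unit_vector_imp_diag E P(1) by blast
qed

lemma clean_difference_similar_diag:
  assumes A: "A \<in> carrier T" "A \<notin> Units T" "\<one>\<^bsub>T\<^esub> \<ominus>\<^bsub>T\<^esub> A \<notin> Units T"
    and e: "idempotent_elem T e" "A \<otimes>\<^bsub>T\<^esub> e = e \<otimes>\<^bsub>T\<^esub> A"
    and w: "A \<ominus>\<^bsub>T\<^esub> e \<in> nilpotents T \<or> A \<ominus>\<^bsub>T\<^esub> e \<in> jacobson T"
  shows "\<exists>P\<in>Units T. \<exists>x y. x \<in> carrier R \<and> y \<in> carrier R \<and>
    inv\<^bsub>T\<^esub> P \<otimes>\<^bsub>T\<^esub> (A \<ominus>\<^bsub>T\<^esub> e) \<otimes>\<^bsub>T\<^esub> P = diag x y"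
proof -
  have ec: "e \<in> carrier T" "e \<otimes>\<^bsub>T\<^esub> e = e" using e(1) by (auto simp: idempotent_elem_def)
  have "e \<noteq> \<zero>\<^bsub>T\<^esub>" "e \<noteq> \<one>\<^bsub>T\<^esub>"
    using M.idempotent_nontrivial_if_quasi_regular[OF A(1) ec(1) A(2,3)] M.quasi_regular_pm[OF w]
    by auto
  moreover have "(A \<ominus>\<^bsub>T\<^esub> e) \<otimes>\<^bsub>T\<^esub> e = e \<otimes>\<^bsub>T\<^esub> (A \<ominus>\<^bsub>T\<^esub> e)"
    using A(1) ec e(2) by (simp add: M.minus_eq M.l_distr M.r_distr M.l_minus M.r_minus)
  ultimately show ?thesis using similar_diag_if_commute_idempotent ec A(1) by blast
qed

lemma strongly_J_clean_if_strongly_nil_clean: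
  assumes A: "A \<in> carrier T" "A \<notin> Units T" "\<one>\<^bsub>T\<^esub> \<ominus>\<^bsub>T\<^esub> A \<notin> Units T"
    and "strongly_nil_clean T A"
  shows "strongly_J_clean T A"
proof -
  obtain e where e: "idempotent_elem T e" "A \<otimes>\<^bsub>T\<^esub> e = e \<otimes>\<^bsub>T\<^esub> A"
    and N: "A \<ominus>\<^bsub>T\<^esub> e \<in> nilpotents T"
    using assms(4) by (auto simp: strongly_nil_clean_def)
  then obtain P x y where P: "P \<in> Units T" and xy: "x \<in> carrier R" "y \<in> carrier R"
    and D: "inv\<^bsub>T\<^esub> P \<otimes>\<^bsub>T\<^esub> (A \<ominus>\<^bsub>T\<^esub> e) \<otimes>\<^bsub>T\<^esub> P = diag x y"
    using clean_difference_similar_diag[OF A] by blast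
  have "diag x y \<in> nilpotents T" using M.Units_conj_nilpotents[OF P N] D by simp
  then have "x \<in> jacobson R \<and> y \<in> jacobson R"
    using diag_nilpotents_iff xy nilpotents_subset_jacobson by blast
  then have "inv\<^bsub>T\<^esub> P \<otimes>\<^bsub>T\<^esub> (A \<ominus>\<^bsub>T\<^esub> e) \<otimes>\<^bsub>T\<^esub> P \<in> jacobson T"
    unfolding D using diag_jacobson_iff xy by blast
  moreover have "A \<ominus>\<^bsub>T\<^esub> e \<in> carrier T" using N by (simp add: nilpotents_def)
  ultimately have "A \<ominus>\<^bsub>T\<^esub> e \<in> jacobson T" using M.Units_conj_jacobson_iff[OF P] by blast
  with e show ?thesis unfolding strongly_J_clean_def by blast
qed

lemma strongly_nil_clean_if_strongly_J_clean:
  assumes A: "A \<in> carrier T" "A \<notin> Units T" "\<one>\<^bsub>T\<^esub> \<ominus>\<^bsub>T\<^esub> A \<notin> Units T"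
    and "strongly_J_clean T A" and nil: "nil_jacobson R"
  shows "strongly_nil_clean T A"
proof -
  obtain e where e: "idempotent_elem T e" "A \<otimes>\<^bsub>T\<^esub> e = e \<otimes>\<^bsub>T\<^esub> A"
    and J: "A \<ominus>\<^bsub>T\<^esub> e \<in> jacobson T"
    using assms(4) by (auto simp: strongly_J_clean_def)
  then obtain P x y where P: "P \<in> Units T" and xy: "x \<in> carrier R" "y \<in> carrier R"
    and D: "inv\<^bsub>T\<^esub> P \<otimes>\<^bsub>T\<^esub> (A \<ominus>\<^bsub>T\<^esub> e) \<otimes>\<^bsub>T\<^esub> P = diag x y"
    using clean_difference_similar_diag[OF A] by blast
  have "diag x y \<in> jacobson T" using M.Units_conj_jacobson[OF P J] D by simp
  then have "x \<in> nilpotents R \<and> y \<in> nilpotents R"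
    using diag_jacobson_iff xy nil by (auto simp: nil_jacobson_def)
  then have "inv\<^bsub>T\<^esub> P \<otimes>\<^bsub>T\<^esub> (A \<ominus>\<^bsub>T\<^esub> e) \<otimes>\<^bsub>T\<^esub> P \<in> nilpotents T"
    unfolding D using diag_nilpotents_iff xy by blast
  moreover have "A \<ominus>\<^bsub>T\<^esub> e \<in> carrier T" using J M.jacobson_subset by blast
  ultimately have "A \<ominus>\<^bsub>T\<^esub> e \<in> nilpotents T" using M.Units_conj_nilpotents_iff[OF P] by blast
  with e show ?thesis unfolding strongly_nil_clean_def by blast
qed

lemma diag_jacobson_not_Units:
  assumes j: "j \<in> jacobson R" and y: "y \<in> carrier R" shows "diag j y \<notin> Units T"
proof
  assume "diag j y \<in> Units T"
  then obtain B where B: "B \<in> carrier T" "diag j y \<otimes>\<^bsub>T\<^esub> B = \<one>\<^bsub>T\<^esub>" unfolding Units_def by auto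
  obtain b1 b2 b3 b4 where b: "B = (b1, b2, b3, b4)" "b1 \<in> carrier R"
    "b2 \<in> carrier R" "b3 \<in> carrier R" "b4 \<in> carrier R"
    using B(1) by (cases B) (auto simp: M2s_carrier)
  have jc: "j \<in> carrier R" using j jacobson_subset by auto
  have "j \<otimes> b1 = \<one>" using B(2) b jc y by (simp add: M2s_simps)
  moreover have "j \<otimes> b1 \<in> jacobson R" using j b(2) by (rule jacobson_r_closed)
  ultimately show False using one_notin_jacobson by simp
qed

lemma commute_diag_jacobson_one_imp_diag:
  assumes j: "j \<in> jacobson R"
    and e: "e = (p, q, r, u)" "e \<in> carrier T" "diag j \<one> \<otimes>\<^bsub>T\<^esub> e = e \<otimes>\<^bsub>T\<^esub> diag j \<one>"
  shows "q = \<zero>" "r = \<zero>"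
proof -
  have jc: "j \<in> carrier R" using j jacobson_subset by auto
  have c: "p \<in> carrier R" "q \<in> carrier R" "r \<in> carrier R" "u \<in> carrier R"
    using e by (auto simp: M2s_carrier)
  have "j \<otimes> q = q" "r \<otimes> j = r" using e jc c by (auto simp: M2s_simps)
  then have q: "(\<one> \<ominus> j) \<otimes> q = \<zero>" and r: "r \<otimes> (\<one> \<ominus> j) = \<zero>"
    using jc c by (simp_all add: minus_eq l_distr r_distr l_minus r_minus r_neg)
  have u: "\<one> \<ominus> j \<in> Units R" using j by (rule one_minus_jacobson_Units)
  have "q = inv (\<one> \<ominus> j) \<otimes> ((\<one> \<ominus> j) \<otimes> q)" using u c by simp
  then show "q = \<zero>" using q u by simp
  have "r = (r \<otimes> (\<one> \<ominus> j)) \<otimes> inv (\<one> \<ominus> j)" using u c jc by (simp add: m_assoc)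
  then show "r = \<zero>" using r u by simp
qed

lemma nil_jacobson_if_strongly_nil_clean:
  assumes clean: "\<forall>A\<in>carrier T. A \<notin> Units T \<and> \<one>\<^bsub>T\<^esub> \<ominus>\<^bsub>T\<^esub> A \<notin> Units T \<longrightarrow> strongly_nil_clean T A"
  shows "nil_jacobson R"
  unfolding nil_jacobson_def
proof
  fix j assume j: "j \<in> jacobson R"
  have jc: "j \<in> carrier R" using j jacobson_subset by auto
  \<comment> \<open>test the hypothesis on diag(j, 1), which is a non-unit as is 1 - diag(j, 1) = diag(1 - j, 0)\<close>
  have "\<one>\<^bsub>T\<^esub> \<ominus>\<^bsub>T\<^esub> diag j \<one> = diag (\<one> \<ominus> j) \<zero>"
    using jc by (simp add: M2s_one M2s_minus minus_eq r_neg)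
  then have "strongly_nil_clean T (diag j \<one>)"
    using clean jc diag_jacobson_not_Units[OF j] diag_not_Units(1)[of "\<one> \<ominus> j"]
    by (auto simp: M2s_carrier)
  then obtain e where e: "idempotent_elem T e" "diag j \<one> \<otimes>\<^bsub>T\<^esub> e = e \<otimes>\<^bsub>T\<^esub> diag j \<one>"
    and N: "diag j \<one> \<ominus>\<^bsub>T\<^esub> e \<in> nilpotents T"
    by (auto simp: strongly_nil_clean_def)
  obtain p q r u where eq: "e = (p, q, r, u)"
    and c: "p \<in> carrier R" "q \<in> carrier R" "r \<in> carrier R" "u \<in> carrier R"
    using e(1) by (cases e) (auto simp: idempotent_elem_def M2s_carrier)
  have ec: "e \<in> carrier T" using e(1) by (simp add: idempotent_elem_def)
  have qr: "q = \<zero>" "r = \<zero>" using commute_diag_jacobson_one_imp_diag[OF j eq ec e(2)] by auto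
  have "p \<otimes> p = p" using e(1) c by (simp add: idempotent_elem_def eq qr M2s_simps)
  then have "p = \<zero> \<or> p = \<one>" using c(1) idempotent_eq_zero_or_one by blast
  moreover have "diag j \<one> \<ominus>\<^bsub>T\<^esub> e = diag (j \<ominus> p) (\<one> \<ominus> u)"
    using jc c by (simp add: eq qr M2s_minus minus_eq)
  then have "j \<ominus> p \<in> nilpotents R" using N jc c diag_nilpotents_iff by simp
  moreover have "j \<ominus> \<one> \<notin> jacobson R"
    using Units_if_minus_one_jacobson jacobson_not_Units j jc by blast
  ultimately show "j \<in> nilpotents R"
    using nilpotents_subset_jacobson jc by (auto simp: minus_eq)
qed

end

theorem proposition2p14:
  fixes R :: "('a, 'b) ring_scheme" and s :: 'a
  assumes "ring R" and "local_ring R" and "central_elem R s"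
  shows "(\<forall>A\<in>carrier (M2s R s).
            A \<notin> Units (M2s R s) \<and> \<one>\<^bsub>M2s R s\<^esub> \<ominus>\<^bsub>M2s R s\<^esub> A \<notin> Units (M2s R s)
            \<longrightarrow> strongly_nil_clean (M2s R s) A)
     \<longleftrightarrow> ((\<forall>A\<in>carrier (M2s R s).
            A \<notin> Units (M2s R s) \<and> \<one>\<^bsub>M2s R s\<^esub> \<ominus>\<^bsub>M2s R s\<^esub> A \<notin> Units (M2s R s)
            \<longrightarrow> strongly_J_clean (M2s R s) A)
          \<and> nil_jacobson R)"
proof -
  interpret m2s_local R s
    using assms by (simp add: m2s_local_def m2s_def m2s_axioms_def loc_ring_def loc_ring_axioms_def)
  show ?thesis
    using strongly_J_clean_if_strongly_nil_clean strongly_nil_clean_if_strongly_J_clean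
      nil_jacobson_if_strongly_nil_clean
    by blast
qed

end
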